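(* Let $b\in\mathbb N$ with $b\ge2d$, $\epsilon>0$, and let $g:(0,\infty)\to(0,\infty)$ be decreasing to zero. Fix an environment $\boldsymbol w$ such that for all $n$ large enough: (1) for all $z\in B_{n+b}$ the edge set $\mathfrak E(B_b(z))$ contains at most $3d-1$ edges with conductance $\le g(n^{1-\epsilon})$; and (2) the graph of edges with conductance $>g(n^{1-\epsilon})$ has a unique infinite connected component $\mathscr D_n$. Then for $n$ large enough the set $\mathscr I_n=B_n\setminus\mathscr D_n$ is $b$-sparse.
   Context: Lattice $\mathbb Z^d$, $d\ge2$, with nearest-neighbour edges $\mathfrak E_d$ and positive conductances $(w_e)_{e\in\mathfrak E_d}$. $B_n=[-n,n]^d\cap\mathbb Z^d$ and $B_m(z)=\{x\in\mathbb Z^d:|x-z|_\infty\le m\}$. $\mathfrak E(A)=\{\{x,x+\boldsymbol e_j\}: x\in A,\ j\in\{1,\dots,d\}\}$. An edge is called open at level $n$ if its conductance exceeds $g(n^{1-\epsilon})$; $\mathscr D_n$ is the infinite open cluster (sites) of this environment. A set $\mathscr I\subset\mathbb Z^d$ is $b$-sparse if every box $B_b(z)$, $z\in\mathbb Z^d$, contains at most one site of $\mathscr I$. *)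

theory Defs
  imports "HOL-Analysis.Analysis"
begin

type_synonym 'd site = "int ^ 'd"

definition box :: "nat \<Rightarrow> 'd::finite site \<Rightarrow> 'd site set" where
  "box m z = {x. \<forall>i. \<bar>x $ i - z $ i\<bar> \<le> int m}"

definition unitv :: "'d::finite \<Rightarrow> 'd site" where
  "unitv j = (\<chi> i. if i = j then 1 else 0)"

definition nn_edges :: "'d::finite site set set" where
  "nn_edges = {{x, x + unitv j} | x j. True}"

definition edges_of :: "'d::finite site set \<Rightarrow> 'd site set set" where
  "edges_of A = {{x, x + unitv j} | x j. x \<in> A}"

definition open_edge :: "('d::finite site set \<Rightarrow> real) \<Rightarrow> (real \<Rightarrow> real) \<Rightarrow> real \<Rightarrow> nat \<Rightarrow> 'd site set \<Rightarrow> bool" where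
  "open_edge w g eps n e \<longleftrightarrow> e \<in> nn_edges \<and> w e > g (real n powr (1 - eps))"

definition open_adj :: "('d::finite site set \<Rightarrow> real) \<Rightarrow> (real \<Rightarrow> real) \<Rightarrow> real \<Rightarrow> nat \<Rightarrow> ('d site \<times> 'd site) set" where
  "open_adj w g eps n = {(x, y). open_edge w g eps n {x, y}}"

definition cluster :: "('d::finite site set \<Rightarrow> real) \<Rightarrow> (real \<Rightarrow> real) \<Rightarrow> real \<Rightarrow> nat \<Rightarrow> 'd site \<Rightarrow> 'd site set" where
  "cluster w g eps n x = {y. (x, y) \<in> (open_adj w g eps n)\<^sup>*}"

definition infinite_clusters :: "('d::finite site set \<Rightarrow> real) \<Rightarrow> (real \<Rightarrow> real) \<Rightarrow> real \<Rightarrow> nat \<Rightarrow> 'd site set set" where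
  "infinite_clusters w g eps n = {C. (\<exists>x. C = cluster w g eps n x) \<and> infinite C}"

definition Dcl :: "('d::finite site set \<Rightarrow> real) \<Rightarrow> (real \<Rightarrow> real) \<Rightarrow> real \<Rightarrow> nat \<Rightarrow> 'd site set" where
  "Dcl w g eps n = (THE C. C \<in> infinite_clusters w g eps n)"

definition sparse :: "nat \<Rightarrow> 'd::finite site set \<Rightarrow> bool" where
  "sparse b I \<longleftrightarrow> (\<forall>z. card (box b z \<inter> I) \<le> 1)"

end

theory Submission
  imports Defs
begin

text \<open>Call a box \<open>B\<^sub>b(z)\<close> good if it contains at most \<open>3d - 1\<close> closed bonds. Pigeonhole
  arguments over families of disjoint lines produce, in a good box, lines all of whose bonds
  are open; any two such lines in a good box are joined by open paths, and neighbouring good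
  boxes share one. A non-isolated site of a good box reaches such a line, for otherwise its
  cluster would be enclosed by more than \<open>3d - 1\<close> closed bonds. Hence the non-isolated sites
  of \<open>B\<^sub>n\<close> form a single cluster, which is \<open>\<D>\<^sub>n\<close> because the environment is monotone
  in \<open>n\<close>. Two sites of \<open>B\<^sub>n - \<D>\<^sub>n\<close> in a common box \<open>B\<^sub>b(z)\<close> are thus both isolated,
  and their closed bonds, plus one more per direction, are \<open>3d\<close> closed bonds in a single
  box of radius \<open>b\<close> centred in \<open>B\<^sub>n\<^sub>+\<^sub>b\<close>.\<close>

lemma unitv_nth [simp]: "unitv j $ i = (if i = j then 1 else 0)"
  by (simp add: unitv_def)

lemma unitv_add_unitv_neq_zero [simp]: "unitv j + unitv k \<noteq> (0 :: 'd::finite site)"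
proof
  assume "unitv j + unitv k = (0 :: 'd site)"
  then have "(unitv j + unitv k) $ j = (0 :: 'd site) $ j" by simp
  then show False by (simp split: if_splits)
qed

lemma unitv_inj: "unitv j = (unitv k :: 'd::finite site) \<Longrightarrow> j = k"
  by (metis unitv_nth zero_neq_one)

lemma unitv_edge_inj:
  assumes "{p, p + unitv j} = {q, q + unitv (k::'d::finite)}"
  shows "p = q \<and> j = k"
proof -
  have "p = q \<and> p + unitv j = q + unitv k \<or> p = q + unitv k \<and> p + unitv j = q"
    using assms by (simp add: doubleton_eq_iff)
  moreover have "\<not> (p = q + unitv k \<and> p + unitv j = q)"
    using unitv_add_unitv_neq_zero[of k j] by (metis add.assoc add_cancel_right_right)
  ultimately show ?thesis by (auto dest: unitv_inj)
qed

lemma nn_edgesE: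
  assumes "{y, y'} \<in> (nn_edges :: 'd::finite site set set)"
  obtains j where "y' = y + unitv j \<or> y = y' + unitv j"
  using assms by (auto simp: nn_edges_def doubleton_eq_iff)

lemma nn_edge_distinct: "{y, y'} \<in> (nn_edges :: 'd::finite site set set) \<Longrightarrow> y \<noteq> y'"
  by (elim nn_edgesE) (auto simp: vec_eq_iff)

lemma nn_edge_coord_close:
  "{y, y'} \<in> (nn_edges :: 'd::finite site set set) \<Longrightarrow> \<bar>y' $ k - y $ k\<bar> \<le> 1"
  by (elim nn_edgesE) auto

lemma mem_box: "y \<in> box m z \<longleftrightarrow> (\<forall>i. \<bar>y $ i - z $ i\<bar> \<le> int m)"
  by (simp add: box_def)

lemma box_mono: "m \<le> m' \<Longrightarrow> box m z \<subseteq> box m' z"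
  by (auto simp: mem_box) (meson of_nat_le_iff order_trans)

lemma box_add: "x \<in> box n 0 \<Longrightarrow> z \<in> box m x \<Longrightarrow> z \<in> box (n + m) (0 :: 'd::finite site)"
  unfolding mem_box
proof (intro allI)
  fix i
  assume "\<forall>i. \<bar>x $ i - 0 $ i\<bar> \<le> int n" and "\<forall>i. \<bar>z $ i - x $ i\<bar> \<le> int m"
  then have "\<bar>x $ i\<bar> \<le> int n" "\<bar>z $ i - x $ i\<bar> \<le> int m" by auto
  then show "\<bar>z $ i - 0 $ i\<bar> \<le> int (n + m)" by simp
qed

lemma box_add_small: "y \<in> box m x \<Longrightarrow> \<forall>i. \<bar>c $ i\<bar> \<le> 1 \<Longrightarrow> y + c \<in> box (Suc m) x"
  unfolding mem_box
proof (intro allI)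
  fix i
  assume "\<forall>i. \<bar>y $ i - x $ i\<bar> \<le> int m" "\<forall>i. \<bar>c $ i\<bar> \<le> 1"
  then have "\<bar>y $ i - x $ i\<bar> \<le> int m" "\<bar>c $ i\<bar> \<le> 1" by auto
  then show "\<bar>(y + c) $ i - x $ i\<bar> \<le> int (Suc m)" by simp
qed

lemma finite_box: "finite (box m (z::'d::finite site))"
proof -
  have "box m z \<subseteq> vec_lambda ` (\<Pi>\<^sub>E i\<in>UNIV. {z$i - int m .. z$i + int m})"
  proof
    fix y assume "y \<in> box m z"
    then have h: "\<bar>y $ i - z $ i\<bar> \<le> int m" for i by (simp add: mem_box)
    have "y $ i \<in> {z$i - int m .. z$i + int m}" for i using h[of i] by (simp add: abs_le_iff)
    then have "vec_nth y \<in> (\<Pi>\<^sub>E i\<in>UNIV. {z$i - int m .. z$i + int m})"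
      by (auto simp: PiE_def extensional_def)
    then show "y \<in> vec_lambda ` (\<Pi>\<^sub>E i\<in>UNIV. {z$i - int m .. z$i + int m})"
      by (rule rev_image_eqI) simp
  qed
  then show ?thesis by (rule finite_subset) (intro finite_imageI finite_PiE, auto)
qed

lemma finite_edges_of_box: "finite (edges_of (box m (z::'d::finite site)))"
proof -
  have "edges_of (box m z) = (\<lambda>(x, j). {x, x + unitv j}) ` (box m z \<times> UNIV)"
    by (auto simp: edges_of_def)
  then show ?thesis by (simp add: finite_box)
qed

lemma finite_imp_subset_box: 
  assumes "finite (K :: 'd::finite site set)"
  obtains R where "K \<subseteq> box R 0"
proof
  let ?R = "Max (insert 0 {nat \<bar>u $ i\<bar> | u i. u \<in> K})"
  have "finite {nat \<bar>u $ i\<bar> | u i. u \<in> K}"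
    using finite_image_set2[of "\<lambda>u. u \<in> K" "\<lambda>i. True" "\<lambda>u i. nat \<bar>u $ i\<bar>"] assms by simp
  then have "nat \<bar>u $ i\<bar> \<le> ?R" if "u \<in> K" for u i
    using that by (intro Max_ge) auto
  then have "\<bar>u $ i\<bar> \<le> int ?R" if "u \<in> K" for u i
    using that by (simp add: nat_le_iff)
  then show "K \<subseteq> box ?R 0" by (auto simp: mem_box)
qed

definition coord_upd :: "'d::finite site \<Rightarrow> 'd \<Rightarrow> int \<Rightarrow> 'd site" where
  "coord_upd r c v = (\<chi> j. if j = c then v else r $ j)"

lemma coord_upd_nth [simp]: "coord_upd r c v $ j = (if j = c then v else r $ j)"
  by (simp add: coord_upd_def)

lemma coord_upd_mem_box: "r \<in> box m z \<Longrightarrow> \<bar>v - z $ c\<bar> \<le> int m \<Longrightarrow> coord_upd r c v \<in> box m z"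
  by (simp add: mem_box)

definition on_line :: "'d::finite \<Rightarrow> 'd site \<Rightarrow> 'd site \<Rightarrow> bool" where
  "on_line i p y \<longleftrightarrow> (\<forall>j. j \<noteq> i \<longrightarrow> y $ j = p $ j)"

lemma on_line_refl [simp]: "on_line i p p"
  by (simp add: on_line_def)

lemma ex_other_coord:
  fixes i :: "'d::finite"
  assumes "CARD('d) \<ge> 2"
  obtains k where "k \<noteq> i"
proof -
  have "\<not> (\<forall>k. k = i)"
  proof
    assume "\<forall>k. k = i"
    then have "(UNIV :: 'd set) = {i}" by auto
    then have "CARD('d) = card {i}" by (simp only:)
    with assms show False by simp
  qed
  then show ?thesis using that by blast
qed

lemma ex_unit_step_towards:
  fixes z z' :: "'d::finite site"
  assumes "z \<noteq> z'" "z \<in> box N 0" "z' \<in> box N 0"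
  obtains y j where "y \<in> box N 0"
    "(\<Sum>k\<in>UNIV. nat \<bar>y $ k - z' $ k\<bar>) < (\<Sum>k\<in>UNIV. nat \<bar>z $ k - z' $ k\<bar>)"
    "y = coord_upd z j (z $ j + 1) \<or> z = coord_upd y j (y $ j + 1)"
proof -
  obtain j where j: "z $ j \<noteq> z' $ j" using assms(1) by (auto simp: vec_eq_iff)
  define y where "y = coord_upd z j (if z $ j < z' $ j then z $ j + 1 else z $ j - 1)"
  have "\<bar>y $ k - 0 $ k\<bar> \<le> int N" for k
    using spec[OF assms(2)[unfolded mem_box], of k] spec[OF assms(3)[unfolded mem_box], of k] j
    by (cases "k = j") (auto simp: y_def)
  then have "y \<in> box N 0" by (simp add: mem_box)
  moreover have "(\<Sum>k\<in>UNIV. nat \<bar>y $ k - z' $ k\<bar>) < (\<Sum>k\<in>UNIV. nat \<bar>z $ k - z' $ k\<bar>)"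
  proof (rule sum_strict_mono_ex1)
    show "\<forall>k\<in>UNIV. nat \<bar>y $ k - z' $ k\<bar> \<le> nat \<bar>z $ k - z' $ k\<bar>"
      using j by (auto simp: y_def)
    show "\<exists>k\<in>UNIV. nat \<bar>y $ k - z' $ k\<bar> < nat \<bar>z $ k - z' $ k\<bar>"
      using j by (intro bexI[of _ j]) (auto simp: y_def)
  qed simp
  moreover have "y = coord_upd z j (z $ j + 1) \<or> z = coord_upd y j (y $ j + 1)"
    by (auto simp: y_def vec_eq_iff)
  ultimately show ?thesis using that by blast
qed

lemma ex_line_exit:
  fixes S :: "'d::finite site set"
  assumes "finite S" "p \<in> S" "c $ j \<noteq> 0" "on_line j 0 c"
  shows "\<exists>y\<in>S. on_line j p y \<and> y + c \<notin> S"
proof -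
  define L where "L = {y \<in> S. on_line j p y}"
  define f where "f y = sgn (c $ j) * y $ j" for y :: "'d site"
  have "finite L" "p \<in> L" using assms(1,2) by (auto simp: L_def)
  then have "Max (f ` L) \<in> f ` L" by (intro Max_in) auto
  then obtain y where y: "y \<in> L" "f y = Max (f ` L)" by auto
  have "y + c \<notin> S"
  proof
    assume "y + c \<in> S"
    moreover have "on_line j p (y + c)" using y(1) assms(4) by (auto simp: L_def on_line_def)
    ultimately have "f (y + c) \<le> f y" using y \<open>finite L\<close> by (simp add: L_def)
    moreover have "f (y + c) = f y + \<bar>c $ j\<bar>" by (simp add: f_def algebra_simps abs_sgn)
    ultimately show False using assms(3) by simp
  qed
  with y(1) show ?thesis by (auto simp: L_def)
qed

locale open_bonds =
  fixes isopen :: "'d::finite site set \<Rightarrow> bool" and b :: nat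
  assumes open_nn_edge: "isopen e \<Longrightarrow> e \<in> nn_edges"
    and card_ge_2: "CARD('d) \<ge> 2"
    and b_ge: "b \<ge> 2 * CARD('d)"
begin

definition adj :: "('d site \<times> 'd site) set" where
  "adj = {(x, y). isopen {x, y}}"

abbreviation linked :: "'d site \<Rightarrow> 'd site \<Rightarrow> bool" where
  "linked x y \<equiv> (x, y) \<in> adj\<^sup>*"

lemma linked_sym: "linked x y \<Longrightarrow> linked y x"
proof -
  have "sym adj" by (auto simp: adj_def insert_commute intro: symI)
  then show "linked x y \<Longrightarrow> linked y x" by (meson sym_rtrancl symD)
qed

lemma linked_trans: "linked x y \<Longrightarrow> linked y u \<Longrightarrow> linked x u"
  by (rule rtrancl_trans)

lemma linked_edge: "isopen {x, y} \<Longrightarrow> linked x y"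
  by (auto simp: adj_def)

definition few_closed :: "'d site \<Rightarrow> bool" where
  "few_closed z \<longleftrightarrow> card {e \<in> edges_of (box b z). \<not> isopen e} \<le> 3 * CARD('d) - 1"

definition open_line :: "'d site \<Rightarrow> 'd \<Rightarrow> 'd site \<Rightarrow> bool" where
  "open_line z i p \<longleftrightarrow>
     (\<forall>y. y \<in> box b z \<longrightarrow> y + unitv i \<in> box b z \<longrightarrow> on_line i p y \<longrightarrow> isopen {y, y + unitv i})"

definition closed_bonds :: "'d site \<Rightarrow> ('d site \<times> 'd) set" where
  "closed_bonds z = {(x, j). x \<in> box b z \<and> \<not> isopen {x, x + unitv j}}"

lemma finite_closed_bonds: "finite (closed_bonds z)"
  by (rule finite_subset[of _ "box b z \<times> UNIV"]) (auto simp: closed_bonds_def finite_box)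

lemma card_closed_bonds_le:
  assumes "few_closed z"
  shows "card (closed_bonds z) \<le> 3 * CARD('d) - 1"
proof -
  let ?edge = "\<lambda>(x, j). {x, x + unitv j}"
  have "inj_on ?edge (closed_bonds z)"
    by (auto intro!: inj_onI dest: unitv_edge_inj)
  moreover have "?edge ` closed_bonds z \<subseteq> {e \<in> edges_of (box b z). \<not> isopen e}"
    by (auto simp: edges_of_def closed_bonds_def)
  ultimately have "card (closed_bonds z) \<le> card {e \<in> edges_of (box b z). \<not> isopen e}"
    by (intro card_inj_on_le) (auto intro: finite_subset[OF _ finite_edges_of_box])
  with assms show ?thesis by (simp add: few_closed_def)
qed

text \<open>Pigeonhole: each closed bond lies on a line of at most one family.\<close>
lemma ex_family_of_open_lines:
  assumes "few_closed z" "finite A" "card A > 3 * CARD('d) - 1"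
    and disj: "\<And>a a' i q q' y. a \<in> A \<Longrightarrow> a' \<in> A \<Longrightarrow> (i, q) \<in> F a \<Longrightarrow> (i, q') \<in> F a'
                 \<Longrightarrow> on_line i q y \<Longrightarrow> on_line i q' y \<Longrightarrow> a = a'"
  shows "\<exists>a\<in>A. \<forall>(i, q)\<in>F a. open_line z i q"
proof (rule ccontr)
  assume "\<not> ?thesis"
  then have "\<exists>x j q. (j, q) \<in> F a \<and> on_line j q x \<and> x \<in> box b z \<and> \<not> isopen {x, x + unitv j}"
    if "a \<in> A" for a
    using that by (fastforce simp: open_line_def)
  then obtain x j where closed: "\<And>a. a \<in> A \<Longrightarrow> \<exists>q. (j a, q) \<in> F a \<and> on_line (j a) q (x a)
      \<and> x a \<in> box b z \<and> \<not> isopen {x a, x a + unitv (j a)}"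
    by metis
  have "inj_on (\<lambda>a. (x a, j a)) A"
  proof (rule inj_onI)
    fix a a' assume "a \<in> A" "a' \<in> A" "(x a, j a) = (x a', j a')"
    with closed[of a] closed[of a'] disj[of a a'] show "a = a'" by auto
  qed
  then have "card A \<le> card (closed_bonds z)"
    using closed by (intro card_inj_on_le finite_closed_bonds) (auto simp: closed_bonds_def)
  with card_closed_bonds_le[OF assms(1)] assms(3) show False by simp
qed

lemma open_line_cong: "on_line i p q \<Longrightarrow> open_line z i p = open_line z i q"
  by (simp add: open_line_def on_line_def)

lemma open_line_linked_coord_upd:
  assumes "open_line z i p" "p \<in> box b z" "coord_upd p i (p $ i + int t) \<in> box b z"
  shows "linked p (coord_upd p i (p $ i + int t))"
  using assms(3)
proof (induction t)
  case 0
  have "coord_upd p i (p $ i) = p" by (simp add: vec_eq_iff)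
  then show ?case by simp
next
  case (Suc t)
  let ?y = "coord_upd p i (p $ i + int t)"
  have "\<bar>p $ i + int t - z $ i\<bar> \<le> int b"
    using Suc.prems assms(2) by (auto simp: mem_box dest!: spec[of _ i])
  then have "?y \<in> box b z" by (rule coord_upd_mem_box[OF assms(2)])
  moreover have "?y + unitv i = coord_upd p i (p $ i + int (Suc t))"
    by (simp add: vec_eq_iff)
  ultimately have "isopen {?y, coord_upd p i (p $ i + int (Suc t))}"
    using assms(1) Suc.prems unfolding open_line_def on_line_def by (metis coord_upd_nth)
  with Suc.IH[OF \<open>?y \<in> box b z\<close>] show ?case by (blast intro: linked_trans linked_edge)
qed

lemma open_line_linked:
  assumes "open_line z i p" "p \<in> box b z" "y \<in> box b z" "on_line i p y"
  shows "linked p y"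
proof -
  have upd: "coord_upd u i (v $ i) = v" if "on_line i u v" for u v
    using that by (auto simp: vec_eq_iff on_line_def)
  have sym: "on_line i y p" using assms(4) by (simp add: on_line_def)
  show ?thesis
  proof (cases "p $ i \<le> y $ i")
    case True
    then have "y = coord_upd p i (p $ i + int (nat (y $ i - p $ i)))"
      using upd[OF assms(4)] by simp
    with open_line_linked_coord_upd[OF assms(1,2)] assms(3) show ?thesis by metis
  next
    case False
    then have "p = coord_upd y i (y $ i + int (nat (p $ i - y $ i)))"
      using upd[OF sym] by simp
    moreover have "open_line z i y" using assms(1) open_line_cong[OF assms(4)] by simp
    ultimately show ?thesis
      using open_line_linked_coord_upd[of z i y] assms(2,3) linked_sym by metis
  qed
qed

lemma b_ge_4: "b \<ge> 4"
  using b_ge card_ge_2 by linarith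

text \<open>The range of \<open>\<beta>\<close> is half-open so that it also fits the box around \<open>z + e\<^sub>i\<close>,
  as needed in \<open>ex_common_open_line\<close>.\<close>
lemma ex_open_line_coord_upd:
  assumes "few_closed z" "c \<noteq> i"
  obtains \<beta> where "z $ i - int b < \<beta>" "\<beta> \<le> z $ i + int b" "open_line z c (coord_upd r i \<beta>)"
proof -
  have "\<exists>\<beta>\<in>{z $ i - int b <.. z $ i + int b}. \<forall>(j, q)\<in>{(c, coord_upd r i \<beta>)}. open_line z j q"
  proof (rule ex_family_of_open_lines[OF assms(1)])
    show "3 * CARD('d) - 1 < card {z $ i - int b <.. z $ i + int b}"
      using b_ge card_ge_2 by simp
  next
    fix \<beta> \<beta>' j q q' y
    assume "(j, q) \<in> {(c, coord_upd r i \<beta>)}" "(j, q') \<in> {(c, coord_upd r i \<beta>')}"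
      "on_line j q y" "on_line j q' y"
    with assms(2) show "\<beta> = \<beta>'" by (auto simp: on_line_def dest!: spec[of _ i])
  qed simp
  with that show ?thesis by auto
qed

lemma linked_across:
  assumes "few_closed z" "c \<noteq> i" "open_line z i r" "open_line z i r'"
    "r \<in> box b z" "r' \<in> box b z" "on_line c r r'"
  shows "linked r r'"
proof -
  obtain \<beta> where \<beta>: "z $ i - int b < \<beta>" "\<beta> \<le> z $ i + int b" "open_line z c (coord_upd r i \<beta>)"
    using ex_open_line_coord_upd[OF assms(1,2)] .
  have box: "coord_upd r i \<beta> \<in> box b z" "coord_upd r' i \<beta> \<in> box b z"
    using \<beta>(1,2) assms(5,6) by (auto intro!: coord_upd_mem_box)
  have "linked r (coord_upd r i \<beta>)"
    using open_line_linked[OF assms(3,5) box(1)] by (simp add: on_line_def)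
  moreover have "linked (coord_upd r i \<beta>) (coord_upd r' i \<beta>)"
    using open_line_linked[OF \<beta>(3) box] assms(7) by (simp add: on_line_def)
  moreover have "linked r' (coord_upd r' i \<beta>)"
    using open_line_linked[OF assms(4,6) box(2)] by (simp add: on_line_def)
  ultimately show ?thesis by (blast intro: linked_trans linked_sym)
qed

lemma linked_by_switching_coords:
  assumes "few_closed z" "p \<in> box b z" "q \<in> box b z"
    and mixed_open: "\<And>r. (\<forall>j. r $ j = p $ j \<or> r $ j = q $ j) \<Longrightarrow> open_line z i r"
  shows "linked p q"
proof -
  define mix where "mix S = (\<chi> j. if j \<in> S then q $ j else p $ j)" for S
  have mix_nth: "mix S $ j = (if j \<in> S then q $ j else p $ j)" for S j
    by (simp add: mix_def)
  have mix_box: "mix S \<in> box b z" and mix_open: "open_line z i (mix S)" for S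
    using assms(2,3) by (auto simp: mem_box mix_nth intro!: mixed_open)
  have "linked p (mix S)" if "S \<subseteq> UNIV - {i}" for S
  proof -
    have "finite S" by simp
    then show ?thesis using that
    proof (induction S)
      case empty
      have "mix {} = p" by (simp add: vec_eq_iff mix_nth)
      then show ?case by simp
    next
      case (insert c S)
      then have "c \<noteq> i" "on_line c (mix S) (mix (insert c S))"
        by (auto simp: on_line_def mix_nth)
      then have "linked (mix S) (mix (insert c S))"
        using linked_across[OF assms(1) _ mix_open mix_open mix_box mix_box] by blast
      with insert show ?case by (blast intro: linked_trans)
    qed
  qed
  moreover have "on_line i (mix (UNIV - {i})) q"
    by (simp add: on_line_def mix_nth)
  ultimately show ?thesis
    using open_line_linked[OF mix_open mix_box assms(3)] by (blast intro: linked_trans)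
qed

text \<open>Park a spare coordinate \<open>k\<close> at a value \<open>\<alpha>\<close> for which the \<open>i\<close>-lines through all points
  mixing the other coordinates of \<open>p\<close> and \<open>q\<close> are open.\<close>
lemma linked_open_lines_same_dir:
  assumes "few_closed z" "open_line z i p" "open_line z i q" "p \<in> box b z" "q \<in> box b z"
  shows "linked p q"
proof -
  obtain k where ki: "k \<noteq> i" using ex_other_coord[OF card_ge_2] .
  define mixed where
    "mixed \<alpha> = {(i, r) | r. r $ k = \<alpha> \<and> (\<forall>j. j \<noteq> k \<longrightarrow> r $ j = p $ j \<or> r $ j = q $ j)}" for \<alpha>
  have "\<exists>\<alpha>\<in>{z $ k - int b .. z $ k + int b}. \<forall>(j, r)\<in>mixed \<alpha>. open_line z j r"
  proof (rule ex_family_of_open_lines[OF assms(1)])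
    show "3 * CARD('d) - 1 < card {z $ k - int b .. z $ k + int b}"
      using b_ge card_ge_2 by simp
  next
    fix \<alpha> \<alpha>' j r r' y
    assume "(j, r) \<in> mixed \<alpha>" "(j, r') \<in> mixed \<alpha>'" "on_line j r y" "on_line j r' y"
    with ki show "\<alpha> = \<alpha>'" by (auto simp: mixed_def on_line_def dest!: spec[of _ k])
  qed simp
  then obtain \<alpha> where "\<alpha> \<in> {z $ k - int b .. z $ k + int b}" "\<forall>(j, r)\<in>mixed \<alpha>. open_line z j r"
    by blast
  then have \<alpha>: "\<bar>\<alpha> - z $ k\<bar> \<le> int b" "\<And>r. (i, r) \<in> mixed \<alpha> \<Longrightarrow> open_line z i r"
    by auto
  let ?p = "coord_upd p k \<alpha>" and ?q = "coord_upd q k \<alpha>"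
  have box: "?p \<in> box b z" "?q \<in> box b z"
    using \<alpha>(1) assms(4,5) by (simp_all add: coord_upd_mem_box)
  have "open_line z i r" if "\<forall>j. r $ j = ?p $ j \<or> r $ j = ?q $ j" for r
  proof (intro \<alpha>(2))
    have r: "r $ j = (if j = k then \<alpha> else p $ j) \<or> r $ j = (if j = k then \<alpha> else q $ j)" for j
      using that by simp
    have "r $ k = \<alpha>" using r[of k] by simp
    moreover have "r $ j = p $ j \<or> r $ j = q $ j" if "j \<noteq> k" for j using r[of j] that by simp
    ultimately show "(i, r) \<in> mixed \<alpha>" by (simp add: mixed_def)
  qed
  then have "linked ?p ?q" "open_line z i ?p" "open_line z i ?q"
    using linked_by_switching_coords[OF assms(1) box] by auto
  moreover have "on_line k p ?p" "on_line k q ?q" by (simp_all add: on_line_def)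
  ultimately have "linked p ?p" "linked q ?q"
    using linked_across[OF assms(1) ki] assms(2-5) box by blast+
  with \<open>linked ?p ?q\<close> show ?thesis by (blast intro: linked_trans linked_sym)
qed

lemma linked_open_lines:
  assumes "few_closed z" "open_line z i p" "open_line z j q" "p \<in> box b z" "q \<in> box b z"
  shows "linked p q"
proof (cases "i = j")
  case True
  with assms show ?thesis by (blast intro: linked_open_lines_same_dir)
next
  case False
  obtain \<beta> where \<beta>: "z $ i - int b < \<beta>" "\<beta> \<le> z $ i + int b" "open_line z j (coord_upd p i \<beta>)"
    using ex_open_line_coord_upd[OF assms(1)] False by metis
  have "coord_upd p i \<beta> \<in> box b z" using \<beta>(1,2) assms(4) by (simp add: coord_upd_mem_box)
  then have "linked p (coord_upd p i \<beta>)" "linked (coord_upd p i \<beta>) q"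
    using open_line_linked[OF assms(2,4)]
      linked_open_lines_same_dir[OF assms(1) \<beta>(3) assms(3) _ assms(5)]
    by (auto simp: on_line_def)
  then show ?thesis by (rule linked_trans)
qed

lemma open_line_mono:
  assumes "open_line z i q" "\<And>y. on_line i q y \<Longrightarrow> y \<in> box b z' \<Longrightarrow> y \<in> box b z"
  shows "open_line z' i q"
  unfolding open_line_def
proof (intro allI impI)
  fix y assume y: "y \<in> box b z'" "y + unitv i \<in> box b z'" "on_line i q y"
  then have "on_line i q (y + unitv i)" by (simp add: on_line_def)
  with y assms(2) have "y \<in> box b z" "y + unitv i \<in> box b z" by auto
  with assms(1) y(3) show "isopen {y, y + unitv i}" by (simp add: open_line_def)
qed

lemma ex_common_open_line:
  assumes "few_closed z"
  obtains i q where "open_line z i q" "open_line (coord_upd z j (z $ j + 1)) i q"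
    "q \<in> box b z" "q \<in> box b (coord_upd z j (z $ j + 1))"
proof -
  let ?z' = "coord_upd z j (z $ j + 1)"
  obtain i where ij: "i \<noteq> j" using ex_other_coord[OF card_ge_2] .
  obtain \<beta> where \<beta>: "z $ j - int b < \<beta>" "\<beta> \<le> z $ j + int b" "open_line z i (coord_upd z j \<beta>)"
    using ex_open_line_coord_upd[OF assms ij] .
  have in_both: "y \<in> box b z \<and> y \<in> box b ?z'"
    if "y $ j = \<beta>" "\<And>c. c \<noteq> j \<Longrightarrow> \<bar>y $ c - z $ c\<bar> \<le> int b" for y
  proof -
    have "\<bar>y $ c - z $ c\<bar> \<le> int b \<and> \<bar>y $ c - ?z' $ c\<bar> \<le> int b" for c
      using that \<beta>(1,2) by (cases "c = j") auto
    then show ?thesis by (simp add: mem_box)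
  qed
  have "open_line ?z' i (coord_upd z j \<beta>)"
  proof (rule open_line_mono[OF \<beta>(3)])
    fix y assume y: "on_line i (coord_upd z j \<beta>) y" "y \<in> box b ?z'"
    have "y $ j = \<beta>" using spec[OF y(1)[unfolded on_line_def], of j] ij by simp
    moreover have "\<bar>y $ c - z $ c\<bar> \<le> int b" if "c \<noteq> j" for c
      using spec[OF y(2)[unfolded mem_box], of c] that by simp
    ultimately show "y \<in> box b z" using in_both by blast
  qed
  moreover have "coord_upd z j \<beta> \<in> box b z" "coord_upd z j \<beta> \<in> box b ?z'"
    using in_both by auto
  ultimately show ?thesis using that \<beta>(3) by blast
qed

lemma ex_open_bond_in_box:
  assumes "few_closed z"
  obtains q q' where "q \<in> box b z" "isopen {q, q'}"
proof -
  fix i :: 'd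
  obtain c where ci: "c \<noteq> i" using ex_other_coord[OF card_ge_2] .
  obtain \<beta> where \<beta>: "z $ i - int b < \<beta>" "\<beta> \<le> z $ i + int b" "open_line z c (coord_upd z i \<beta>)"
    using ex_open_line_coord_upd[OF assms ci] .
  let ?q = "coord_upd z i \<beta>"
  have "?q \<in> box b z" "?q + unitv c \<in> box b z"
    using \<beta>(1,2) ci b_ge_4 by (auto simp: mem_box)
  with \<beta>(3) have "isopen {?q, ?q + unitv c}" by (simp add: open_line_def)
  with \<open>?q \<in> box b z\<close> that show ?thesis by blast
qed

lemma linked_open_lines_in_region:
  assumes few: "\<And>z. z \<in> box N 0 \<Longrightarrow> few_closed z"
    and z': "z' \<in> box N 0" "open_line z' i' p'" "p' \<in> box b z'"
  shows "z \<in> box N 0 \<Longrightarrow> open_line z i p \<Longrightarrow> p \<in> box b z \<Longrightarrow> linked p p'"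
proof (induction "\<Sum>j\<in>UNIV. nat \<bar>z $ j - z' $ j\<bar>" arbitrary: z i p rule: less_induct)
  case less
  show ?case
  proof (cases "z = z'")
    case True
    with less.prems z' few show ?thesis by (blast intro: linked_open_lines)
  next
    case False
    then obtain y j where y: "y \<in> box N 0"
      "(\<Sum>k\<in>UNIV. nat \<bar>y $ k - z' $ k\<bar>) < (\<Sum>k\<in>UNIV. nat \<bar>z $ k - z' $ k\<bar>)"
      "y = coord_upd z j (z $ j + 1) \<or> z = coord_upd y j (y $ j + 1)"
      using ex_unit_step_towards less.prems(1) z'(1) by blast
    obtain i0 q where q: "open_line z i0 q" "open_line y i0 q" "q \<in> box b z" "q \<in> box b y"
      using y(3) ex_common_open_line[OF few[OF less.prems(1)]] ex_common_open_line[OF few[OF y(1)]]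
      by metis
    have "linked p q"
      using linked_open_lines[OF few[OF less.prems(1)] less.prems(2) q(1) less.prems(3) q(3)] .
    moreover have "linked q p'" using less.hyps[OF y(2,1) q(2) q(4)] .
    ultimately show ?thesis by (rule linked_trans)
  qed
qed

lemma not_few_closed_if_three_closed_bonds_per_dir:
  assumes distinct: "\<And>j. u j \<noteq> v j" "\<And>j. u j \<noteq> w j" "\<And>j. v j \<noteq> w j"
    and closed: "\<And>j s. s \<in> {u j, v j, w j} \<Longrightarrow> s \<in> box b z \<and> \<not> isopen {s, s + unitv j}"
  shows "\<not> few_closed z"
proof
  assume "few_closed z"
  let ?bonds = "\<lambda>f :: 'd \<Rightarrow> 'd site. range (\<lambda>j. (f j, j))"
  let ?P = "?bonds u \<union> ?bonds v \<union> ?bonds w"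
  have card_bonds: "card (?bonds f) = CARD('d)" for f
    by (rule card_image) (auto intro: inj_onI)
  have "?bonds u \<inter> ?bonds v = {}" "(?bonds u \<union> ?bonds v) \<inter> ?bonds w = {}"
    using distinct(1) distinct(2,3)[symmetric] by auto
  then have "card ?P = 3 * CARD('d)"
    by (simp add: card_Un_disjoint card_bonds)
  moreover have "card ?P \<le> card (closed_bonds z)"
    using closed by (intro card_mono finite_closed_bonds) (auto simp: closed_bonds_def)
  ultimately show False
    using card_closed_bonds_le[OF \<open>few_closed z\<close>] card_ge_2 by linarith
qed

text \<open>In each direction \<open>j\<close> the bonds leaving \<open>x\<close> and \<open>y\<close> upwards are closed, and so is the
  bond entering the lower of them from below, unless \<open>x\<close> and \<open>y\<close> lie on opposite faces of
  the box, in which case we take the bond entering the upper one.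
  A box of radius \<open>b\<close> accommodates these three bonds for every \<open>j\<close>.\<close>
lemma two_isolated_sites_not_few_closed:
  assumes "x \<noteq> y" "x \<in> box b z" "y \<in> box b z"
    and iso: "\<And>u. \<not> isopen {x, u}" "\<And>u. \<not> isopen {y, u}"
  obtains z' where "z' \<in> box b x" "\<not> few_closed z'"
proof -
  define lo where "lo j = min (x $ j) (y $ j)" for j
  define wide where "wide j \<longleftrightarrow> max (x $ j) (y $ j) - lo j = 2 * int b" for j
  define entered where
    "entered j = (if wide j = (x $ j \<le> y $ j) then y else x)" for j
  define z' where "z' = (\<chi> j. if wide j then lo j + int b else lo j + int b - 1)"
  have gap: "max (x $ j) (y $ j) - lo j \<le> 2 * int b" for j
    using assms(2,3) by (auto simp: mem_box lo_def abs_le_iff dest!: spec[of _ j])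
  have entered_nth: "entered j $ j = (if wide j then lo j + 2 * int b else lo j)" for j
    by (auto simp: entered_def wide_def lo_def)
  have near: "\<bar>x $ j - z' $ j\<bar> \<le> int b" "\<bar>y $ j - z' $ j\<bar> \<le> int b" for j
    using gap[of j] by (auto simp: z'_def wide_def lo_def)
  then have "x \<in> box b z'" "y \<in> box b z'" by (simp_all add: mem_box)
  moreover have "entered j - unitv j \<in> box b z'" for j
    unfolding mem_box
  proof
    fix i
    show "\<bar>(entered j - unitv j) $ i - z' $ i\<bar> \<le> int b"
    proof (cases "i = j")
      case True
      then show ?thesis using entered_nth[of j] b_ge_4 by (simp add: z'_def)
    next
      case False
      then show ?thesis using near[of i] by (simp add: entered_def)
    qed
  qed
  moreover have "entered j - unitv j \<noteq> x \<and> entered j - unitv j \<noteq> y" for j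
  proof -
    have "(entered j - unitv j) $ j \<noteq> x $ j \<and> (entered j - unitv j) $ j \<noteq> y $ j"
      using entered_nth[of j] b_ge_4 by (auto simp: wide_def lo_def)
    then show ?thesis by auto
  qed
  moreover have "\<not> isopen {entered j - unitv j, entered j - unitv j + unitv j}" for j
    using iso(1)[of "x - unitv j"] iso(2)[of "y - unitv j"]
    by (simp add: entered_def insert_commute)
  ultimately have "\<not> few_closed z'"
    using assms(1) iso
    by (intro not_few_closed_if_three_closed_bonds_per_dir
        [of "\<lambda>_. x" "\<lambda>_. y" "\<lambda>j. entered j - unitv j"])
      (auto simp: eq_commute[of "entered _ - unitv _"])
  moreover have "z' \<in> box b x"
    using near by (simp add: mem_box abs_minus_commute)
  ultimately show ?thesis using that by blast
qed

text \<open>Only the two lines in direction \<open>a\<close> may coincide, so this gives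
  \<open>4 d - 2 > 3 d - 1\<close> distinct closed bonds.\<close>
lemma not_few_closed_if_closed_ends_of_two_lines:
  assumes "W True $ a \<noteq> W False $ a"
    and hi: "\<And>j w. hi j w \<in> box b z \<and> \<not> isopen {hi j w, hi j w + unitv j}
      \<and> on_line j (W w) (hi j w)"
    and lo: "\<And>j w. lo j w \<in> box b z \<and> \<not> isopen {lo j w, lo j w + unitv j}
      \<and> on_line j (W w) (lo j w)"
    and hi_lo: "\<And>j w w'. hi j w \<noteq> lo j w'"
  shows "\<not> few_closed z"
proof
  assume "few_closed z"
  define pt where "pt j s w = (if s then hi j w else lo j w)" for j s w
  define I :: "('d \<times> bool \<times> bool) set" where "I = {(j, s, w). \<not> (j = a \<and> w)}"
  have pt_line: "pt j s w $ k = W w $ k" if "k \<noteq> j" for j s w k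
    using hi[of j w] lo[of j w] that by (cases s) (simp_all add: pt_def on_line_def)
  have "inj_on (\<lambda>(j, s, w). (pt j s w, j)) I"
  proof (rule inj_onI, clarsimp)
    fix j s w s' w'
    assume I: "(j, s, w) \<in> I" "(j, s', w') \<in> I" and eq: "pt j s w = pt j s' w'"
    then have "s = s'"
      using hi_lo[of j w w'] hi_lo[of j w' w] by (auto simp: pt_def split: if_splits)
    moreover have "w = w'"
    proof (rule ccontr)
      assume "w \<noteq> w'"
      with I have "j \<noteq> a" by (auto simp: I_def)
      then have "W w $ a = W w' $ a"
        using pt_line[of a j s w] pt_line[of a j s' w'] eq by simp
      with \<open>w \<noteq> w'\<close> assms(1) show False by (cases w; cases w') auto
    qed
    ultimately show "s = s' \<and> w = w'" by simp
  qed
  moreover have "(\<lambda>(j, s, w). (pt j s w, j)) ` I \<subseteq> closed_bonds z"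
    using hi lo by (auto simp: pt_def closed_bonds_def split: if_splits)
  ultimately have "card I \<le> card (closed_bonds z)"
    by (intro card_inj_on_le finite_closed_bonds)
  with card_closed_bonds_le[OF \<open>few_closed z\<close>] have "card I \<le> 3 * CARD('d) - 1" by simp
  moreover have "card I = 4 * CARD('d) - 2"
  proof -
    have "I = UNIV - {(a, False, True), (a, True, True)}" by (auto simp: I_def)
    moreover have "card (UNIV :: ('d \<times> bool \<times> bool) set) = CARD('d) * 4"
      by (simp add: card_cartesian_product flip: UNIV_Times_UNIV)
    ultimately show ?thesis by (simp add: card_Diff_subset)
  qed
  ultimately show False using card_ge_2 by linarith
qed

text \<open>Otherwise each line through \<open>x\<close> or through its neighbour \<open>x'\<close> leaves the finite cluster
  through a closed bond at either end.\<close>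
lemma cluster_exceeds_inner_box:
  assumes "few_closed x" "isopen {x, x'}"
  shows "\<not> {y. linked x y} \<subseteq> box (b - 1) x"
proof
  define S where "S = {y. linked x y}"
  assume "{y. linked x y} \<subseteq> box (b - 1) x"
  then have inner: "S \<subseteq> box (b - 1) x" by (simp add: S_def)
  then have "finite S" using finite_box finite_subset by blast
  have "x \<in> S" "x' \<in> S" using linked_edge[OF assms(2)] by (simp_all add: S_def)
  have exit_closed: "\<not> isopen {y, y + c}" if "y \<in> S" "y + c \<notin> S" for y c
    using that by (auto simp: S_def dest: linked_edge intro: linked_trans)
  obtain a where a: "x $ a \<noteq> x' $ a"
    using nn_edge_distinct[OF open_nn_edge[OF assms(2)]] by (auto simp: vec_eq_iff)
  define W where "W w = (if w then x' else x)" for w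
  have W: "W w \<in> S" for w using \<open>x \<in> S\<close> \<open>x' \<in> S\<close> by (simp add: W_def)
  have "\<exists>t. t \<in> S \<and> on_line j (W w) t \<and> t + unitv j \<notin> S" for j w
    using ex_line_exit[OF \<open>finite S\<close> W[of w], of "unitv j" j] by (auto simp: on_line_def)
  then obtain top where
    top: "\<And>j w. top j w \<in> S \<and> on_line j (W w) (top j w) \<and> top j w + unitv j \<notin> S"
    by metis
  have "\<exists>t. t \<in> S \<and> on_line j (W w) t \<and> t - unitv j \<notin> S" for j w
    using ex_line_exit[OF \<open>finite S\<close> W[of w], of "- unitv j" j] by (auto simp: on_line_def)
  then obtain bot where
    bot: "\<And>j w. bot j w \<in> S \<and> on_line j (W w) (bot j w) \<and> bot j w - unitv j \<notin> S"
    by metis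
  have "bot j w + - unitv j \<in> box (Suc (b - 1)) x" for j w
    using bot[of j w] inner by (intro box_add_small) auto
  then have "bot j w - unitv j \<in> box b x \<and> \<not> isopen {bot j w - unitv j, bot j w - unitv j + unitv j}
      \<and> on_line j (W w) (bot j w - unitv j)" for j w
    using b_ge_4 exit_closed[of "bot j w" "- unitv j"] bot[of j w]
    by (simp add: insert_commute on_line_def)
  moreover have "top j w \<in> box b x \<and> \<not> isopen {top j w, top j w + unitv j}
      \<and> on_line j (W w) (top j w)" for j w
    using top[of j w] exit_closed[of "top j w" "unitv j"] inner box_mono[of "b - 1" b] by auto
  moreover have "top j w \<noteq> bot j w' - unitv j" for j w w'
    using top[of j w] bot[of j w'] by metis
  moreover have "W True $ a \<noteq> W False $ a" using a by (simp add: W_def)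
  ultimately have "\<not> few_closed x"
    by (intro not_few_closed_if_closed_ends_of_two_lines
        [where hi = top and lo = "\<lambda>j w. bot j w - unitv j"])
  with assms(1) show False by contradiction
qed

lemma adj_coord_close: "(u, v) \<in> adj \<Longrightarrow> \<bar>v $ k - u $ k\<bar> \<le> 1"
  using nn_edge_coord_close[OF open_nn_edge] by (simp add: adj_def)

lemma ex_open_line_through_levels:
  assumes "few_closed z" "inj_on (\<lambda>t. p t $ k) {0..b}"
  shows "\<exists>j. \<exists>t\<le>b. open_line z j (p t)"
proof -
  define A where "A = ((UNIV - {k}) \<times> {0..b}) \<union> {(k, 0)}"
  have "card A = (CARD('d) - 1) * (b + 1) + 1"
  proof -
    have "card ((UNIV - {k}) \<times> {0..b}) = (CARD('d) - 1) * (b + 1)"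
      by (simp add: card_cartesian_product)
    then show ?thesis by (simp add: A_def card_Un_disjoint)
  qed
  moreover have "3 * CARD('d) - 1 < (CARD('d) - 1) * (b + 1) + 1"
  proof -
    obtain e where e: "CARD('d) = e + 2" using card_ge_2 le_Suc_ex by (metis add.commute)
    have "(e + 1) * (2 * (e + 2) + 1) \<le> (e + 1) * (b + 1)"
      using b_ge e by (intro mult_le_mono2) simp
    then show ?thesis unfolding e by (simp add: algebra_simps)
  qed
  ultimately have "\<exists>a\<in>A. \<forall>(j, q)\<in>{(fst a, p (snd a))}. open_line z j q"
  proof (intro ex_family_of_open_lines[OF assms(1)])
    fix a a' j q q' y
    assume "a \<in> A" "a' \<in> A" "(j, q) \<in> {(fst a, p (snd a))}" "(j, q') \<in> {(fst a', p (snd a'))}"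
      "on_line j q y" "on_line j q' y"
    with assms(2) show "a = a'"
      by (cases a, cases a') (auto simp: A_def on_line_def inj_on_def dest!: spec[of _ k])
  qed (simp_all add: A_def)
  then show ?thesis by (auto simp: A_def)
qed

definition inner_adj :: "'d site \<Rightarrow> ('d site \<times> 'd site) set" where
  "inner_adj x = {(u, v) \<in> adj. u \<in> box (b - 1) x}"

lemma inner_reach_in_box:
  "(x, y) \<in> (inner_adj x)\<^sup>* \<Longrightarrow> y \<in> box b x \<and> linked x y"
proof (induction rule: rtrancl_induct)
  case base
  show ?case by (simp add: mem_box)
next
  case (step u v)
  then have "u \<in> box (b - 1) x" "(u, v) \<in> adj" by (auto simp: inner_adj_def)
  then have "u + (v - u) \<in> box (Suc (b - 1)) x"
    using adj_coord_close by (intro box_add_small) auto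
  with b_ge_4 step show ?case by (auto intro: rtrancl_into_rtrancl simp: inner_adj_def)
qed

lemma linked_imp_inner_reach:
  assumes "\<And>y. (x, y) \<in> (inner_adj x)\<^sup>* \<Longrightarrow> y \<in> box (b - 1) x"
  shows "linked x y \<Longrightarrow> (x, y) \<in> (inner_adj x)\<^sup>*"
proof (induction rule: rtrancl_induct)
  case (step u v)
  with assms have "(u, v) \<in> inner_adj x" by (simp add: inner_adj_def)
  with step.IH show ?case by (rule rtrancl_into_rtrancl)
qed simp

text \<open>A discrete intermediate value property: bonds change every coordinate by at most one.\<close>
lemma inner_reach_levels:
  assumes "(x, y) \<in> (inner_adj x)\<^sup>*"
  shows "0 \<le> t \<and> t \<le> y $ k - x $ k \<or> y $ k - x $ k \<le> t \<and> t \<le> 0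
    \<Longrightarrow> \<exists>y'. (x, y') \<in> (inner_adj x)\<^sup>* \<and> y' $ k - x $ k = t"
  using assms
proof (induction arbitrary: t rule: rtrancl_induct)
  case (step u v)
  have "\<bar>v $ k - u $ k\<bar> \<le> 1" using step.hyps(2) adj_coord_close by (simp add: inner_adj_def)
  then consider "0 \<le> t \<and> t \<le> u $ k - x $ k \<or> u $ k - x $ k \<le> t \<and> t \<le> 0" | "t = v $ k - x $ k"
    using step.prems by linarith
  then show ?case
    using step.IH step.hyps by cases (blast intro: rtrancl_into_rtrancl)+
qed auto

lemma ex_linked_open_line:
  assumes "few_closed x" "isopen {x, x'}"
  obtains i q where "open_line x i q" "q \<in> box b x" "linked x q"
proof -
  obtain y where "(x, y) \<in> (inner_adj x)\<^sup>*" "y \<notin> box (b - 1) x"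
    using cluster_exceeds_inner_box[OF assms] linked_imp_inner_reach by blast
  moreover from this obtain k where "\<bar>y $ k - x $ k\<bar> > int (b - 1)"
    by (auto simp: mem_box not_le)
  ultimately have k: "\<bar>y $ k - x $ k\<bar> = int b"
    using inner_reach_in_box b_ge_4 by (force simp: mem_box dest!: spec[of _ k])
  define \<sigma> :: int where "\<sigma> = sgn (y $ k - x $ k)"
  have "\<exists>y'. (x, y') \<in> (inner_adj x)\<^sup>* \<and> y' $ k - x $ k = \<sigma> * int t" if "t \<le> b" for t
    using inner_reach_levels[OF \<open>(x, y) \<in> _\<close>, of "\<sigma> * int t" k] k that
    by (auto simp: \<sigma>_def sgn_if abs_if split: if_splits)
  then obtain p where p: "\<And>t. t \<le> b \<Longrightarrow> (x, p t) \<in> (inner_adj x)\<^sup>* \<and> p t $ k - x $ k = \<sigma> * int t"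
    by metis
  have "y $ k - x $ k \<noteq> 0" using k b_ge_4 by auto
  then have "\<sigma> \<noteq> 0" by (simp add: \<sigma>_def sgn_if)
  then have "inj_on (\<lambda>t. p t $ k) {0..b}"
    using p by (intro inj_onI) (metis atLeastAtMost_iff mult_cancel_left of_nat_eq_iff)
  then obtain j t where "t \<le> b" "open_line x j (p t)"
    using ex_open_line_through_levels[OF assms(1)] by blast
  with p[of t] inner_reach_in_box that show ?thesis by blast
qed

lemma non_isolated_sites_linked:
  assumes few: "\<And>z. z \<in> box N 0 \<Longrightarrow> few_closed z"
    and "x \<in> box N 0" "isopen {x, x'}" "y \<in> box N 0" "isopen {y, y'}"
  shows "linked x y"
proof -
  obtain i p where p: "open_line x i p" "p \<in> box b x" "linked x p"
    using ex_linked_open_line[OF few[OF assms(2)] assms(3)] .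
  obtain j q where q: "open_line y j q" "q \<in> box b y" "linked y q"
    using ex_linked_open_line[OF few[OF assms(4)] assms(5)] .
  have "linked p q"
    using linked_open_lines_in_region[OF few assms(4) q(1,2) assms(2) p(1,2)] .
  with p(3) q(3) show ?thesis by (blast intro: linked_trans linked_sym)
qed

end

definition regular_level ::
    "('d::finite site set \<Rightarrow> real) \<Rightarrow> (real \<Rightarrow> real) \<Rightarrow> real \<Rightarrow> nat \<Rightarrow> nat \<Rightarrow> bool" where
  "regular_level w g eps b n \<longleftrightarrow>
     (\<forall>z \<in> box (n + b) 0.
        card {e \<in> edges_of (box b z). w e \<le> g (real n powr (1 - eps))} \<le> 3 * CARD('d) - 1)
     \<and> (\<exists>!C. C \<in> infinite_clusters w g eps n)"

locale conductances =
  fixes w :: "'d::finite site set \<Rightarrow> real" and g :: "real \<Rightarrow> real" and eps :: real and b :: nat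
  assumes card_ge_2: "CARD('d) \<ge> 2"
    and b_ge: "b \<ge> 2 * CARD('d)"
    and g_dec: "\<And>s t. 0 < s \<Longrightarrow> s \<le> t \<Longrightarrow> g t \<le> g s"
begin

abbreviation regular :: "nat \<Rightarrow> bool" where
  "regular \<equiv> regular_level w g eps b"

lemma open_bonds_level: "open_bonds (open_edge w g eps n) b"
  using card_ge_2 b_ge by unfold_locales (auto simp: open_edge_def)

lemma adj_level: "open_bonds.adj (open_edge w g eps n) = open_adj w g eps n"
  by (simp add: open_bonds.adj_def[OF open_bonds_level] open_adj_def)

lemma regular_few_closed:
  assumes "regular n" "z \<in> box (n + b) 0"
  shows "open_bonds.few_closed (open_edge w g eps n) b z"
proof -
  have "{e \<in> edges_of (box b z). \<not> open_edge w g eps n e}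
      = {e \<in> edges_of (box b z). w e \<le> g (real n powr (1 - eps))}"
    by (auto simp: open_edge_def edges_of_def nn_edges_def)
  with assms show ?thesis
    by (simp add: open_bonds.few_closed_def[OF open_bonds_level] regular_level_def)
qed

lemma regular_Dcl: "regular n \<Longrightarrow> Dcl w g eps n \<in> infinite_clusters w g eps n"
  unfolding Dcl_def regular_level_def by (rule theI') blast

lemma regular_infinite_cluster_mem_Dcl:
  assumes "regular n" "infinite (cluster w g eps n x)"
  shows "x \<in> Dcl w g eps n"
proof -
  have "cluster w g eps n x \<in> infinite_clusters w g eps n"
    using assms(2) by (auto simp: infinite_clusters_def)
  with regular_Dcl[OF assms(1)] assms(1) have "cluster w g eps n x = Dcl w g eps n"
    by (auto simp: regular_level_def)
  moreover have "x \<in> cluster w g eps n x" by (simp add: cluster_def)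
  ultimately show ?thesis by simp
qed

lemma regular_Dcl_closed:
  assumes "regular n" "x \<in> Dcl w g eps n" "(x, y) \<in> (open_adj w g eps n)\<^sup>*"
  shows "y \<in> Dcl w g eps n"
proof -
  obtain v where "Dcl w g eps n = cluster w g eps n v"
    using regular_Dcl[OF assms(1)] by (auto simp: infinite_clusters_def)
  with assms(2,3) show ?thesis by (auto simp: cluster_def intro: rtrancl_trans)
qed

lemma open_adj_linked_sym: "(x, y) \<in> (open_adj w g eps n)\<^sup>* \<Longrightarrow> (y, x) \<in> (open_adj w g eps n)\<^sup>*"
  using open_bonds.linked_sym[OF open_bonds_level] by (simp add: adj_level)

lemma regular_non_isolated_linked:
  assumes "regular n" "x \<in> box n 0" "open_edge w g eps n {x, x'}"
    and "y \<in> box n 0" "open_edge w g eps n {y, y'}"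
  shows "(x, y) \<in> (open_adj w g eps n)\<^sup>*"
proof -
  have "open_bonds.few_closed (open_edge w g eps n) b z" if "z \<in> box n 0" for z
    using regular_few_closed[OF assms(1)] box_mono[of n "n + b" 0] that by auto
  from open_bonds.non_isolated_sites_linked[OF open_bonds_level this assms(2-5)] show ?thesis
    by (simp add: adj_level)
qed

definition non_isolated_in_Dcl :: "nat \<Rightarrow> bool" where
  "non_isolated_in_Dcl n \<longleftrightarrow>
     (\<forall>x x'. x \<in> box n 0 \<longrightarrow> open_edge w g eps n {x, x'} \<longrightarrow> x \<in> Dcl w g eps n)"

lemma open_edge_mono_eps_le_1:
  assumes "eps \<le> 1" "1 \<le> m" "m \<le> n" "open_edge w g eps m e"
  shows "open_edge w g eps n e"
proof -
  have "real m powr (1 - eps) \<le> real n powr (1 - eps)"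
    using assms(1-3) by (intro powr_mono2) auto
  then have "g (real n powr (1 - eps)) \<le> g (real m powr (1 - eps))"
    using assms(2) by (intro g_dec) auto
  with assms(4) show ?thesis by (auto simp: open_edge_def)
qed

lemma open_edge_antimono_eps_ge_1:
  assumes "eps \<ge> 1" "1 \<le> m" "m \<le> n" "open_edge w g eps n e"
  shows "open_edge w g eps m e"
proof -
  have "real n powr (1 - eps) \<le> real m powr (1 - eps)"
    using assms(1-3) by (intro powr_mono2') auto
  then have "g (real m powr (1 - eps)) \<le> g (real n powr (1 - eps))"
    using assms(2,3) by (intro g_dec) auto
  with assms(4) show ?thesis by (auto simp: open_edge_def)
qed

lemma open_adj_rtrancl_mono:
  "(\<And>e. open_edge w g eps m e \<Longrightarrow> open_edge w g eps n e) \<Longrightarrow>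
    (x, y) \<in> (open_adj w g eps m)\<^sup>* \<Longrightarrow> (x, y) \<in> (open_adj w g eps n)\<^sup>*"
  by (erule rtrancl_mono[THEN subsetD, rotated]) (auto simp: open_adj_def)

lemma infinite_cluster_non_isolated:
  assumes "infinite (cluster w g eps n u)"
  obtains z where "open_edge w g eps n {u, z}"
proof -
  obtain y where "y \<in> cluster w g eps n u" "y \<noteq> u"
    using infinite_imp_nonempty[of "cluster w g eps n u - {u}"] assms by auto
  then obtain z where "(u, z) \<in> open_adj w g eps n"
    by (auto simp: cluster_def elim: converse_rtranclE)
  with that show ?thesis by (simp add: open_adj_def)
qed

text \<open>For \<open>eps \<le> 1\<close> bonds only open up as \<open>n\<close> grows, so a fixed site of \<open>D\<^sub>N\<close> stays
  in the infinite cluster, and every non-isolated site of \<open>B\<^sub>n\<close> is linked to it.\<close>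
lemma eventually_non_isolated_in_Dcl_eps_le_1:
  assumes "eps \<le> 1" "eventually regular sequentially"
  shows "eventually non_isolated_in_Dcl sequentially"
proof -
  obtain N where "\<And>n. n \<ge> N \<Longrightarrow> regular n \<and> n \<ge> 1"
    using eventually_conj[OF assms(2) eventually_ge_at_top[of 1]]
    by (auto simp: eventually_sequentially)
  then have N: "N \<ge> 1" "\<And>n. n \<ge> N \<Longrightarrow> regular n" by auto
  obtain v where v: "Dcl w g eps N = cluster w g eps N v" "infinite (cluster w g eps N v)"
    using regular_Dcl[OF N(2)[OF order_refl]] by (auto simp: infinite_clusters_def)
  then obtain u where "u \<in> cluster w g eps N v" using infinite_imp_nonempty by blast
  then have u: "(v, u) \<in> (open_adj w g eps N)\<^sup>*" by (simp add: cluster_def)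
  have u_Dcl: "u \<in> Dcl w g eps n" and u_open: "\<exists>z. open_edge w g eps n {u, z}" if "n \<ge> N" for n
  proof -
    have "(u, y) \<in> (open_adj w g eps n)\<^sup>*" if "(v, y) \<in> (open_adj w g eps N)\<^sup>*" for y
      using open_adj_rtrancl_mono[OF open_edge_mono_eps_le_1[OF assms(1) N(1) \<open>n \<ge> N\<close>]
          rtrancl_trans[OF open_adj_linked_sym[OF u] that]] .
    then have "cluster w g eps N v \<subseteq> cluster w g eps n u" by (auto simp: cluster_def)
    then have "infinite (cluster w g eps n u)" using v(2) finite_subset by blast
    then show "u \<in> Dcl w g eps n" "\<exists>z. open_edge w g eps n {u, z}"
      using regular_infinite_cluster_mem_Dcl[OF N(2)[OF that]] infinite_cluster_non_isolated
      by blast+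
  qed
  obtain K where "{u} \<subseteq> box K 0" using finite_imp_subset_box[of "{u}"] by blast
  show ?thesis unfolding eventually_sequentially non_isolated_in_Dcl_def
  proof (intro exI[of _ "max N K"] allI impI)
    fix n x x' assume n: "max N K \<le> n" and x: "x \<in> box n 0" "open_edge w g eps n {x, x'}"
    have "u \<in> box n 0" using \<open>{u} \<subseteq> box K 0\<close> box_mono[of K n] n by auto
    moreover have "n \<ge> N" using n by simp
    ultimately have "(u, x) \<in> (open_adj w g eps n)\<^sup>*"
      using u_open[of n] x N(2)[of n] regular_non_isolated_linked by blast
    with regular_Dcl_closed[OF N(2) u_Dcl] \<open>n \<ge> N\<close> show "x \<in> Dcl w g eps n" by blast
  qed
qed

lemma regular_ex_open_bond_outside:
  assumes "regular n" "R + 2 * b < n"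
  obtains v v' where "v \<in> box n 0" "v \<notin> box R 0" "open_edge w g eps n {v, v'}"
proof -
  fix j :: 'd
  define z where "z = coord_upd 0 j (int (R + b + 1))"
  have "z \<in> box (n + b) 0" using assms(2) by (auto simp: mem_box z_def)
  then obtain v v' where v: "v \<in> box b z" "open_edge w g eps n {v, v'}"
    using open_bonds.ex_open_bond_in_box[OF open_bonds_level regular_few_closed[OF assms(1)]]
    by blast
  have vz: "\<bar>v $ i - z $ i\<bar> \<le> int b" for i using v(1) by (simp add: mem_box)
  have "\<bar>v $ i\<bar> \<le> int n" for i
    using vz[of i] assms(2) by (cases "i = j") (auto simp: z_def)
  then have "v \<in> box n 0" by (simp add: mem_box)
  moreover have "\<bar>v $ j\<bar> > int R" using vz[of j] by (auto simp: z_def)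
  then have "v \<notin> box R 0" by (auto simp: mem_box not_le intro!: exI[of _ j])
  ultimately show ?thesis using v(2) that by blast
qed

text \<open>For \<open>eps \<ge> 1\<close> bonds only close as \<open>n\<close> grows. At a much larger level \<open>n'\<close> a
  non-isolated site near the origin is linked to a non-isolated site far away; that link
  persists at level \<open>n\<close>, so the cluster of every non-isolated site of \<open>B\<^sub>n\<close> is unbounded.\<close>
lemma eventually_non_isolated_in_Dcl_eps_ge_1:
  assumes "eps \<ge> 1" "eventually regular sequentially"
  shows "eventually non_isolated_in_Dcl sequentially"
proof -
  obtain N where N: "\<And>n. n \<ge> N \<Longrightarrow> regular n"
    using assms(2) by (auto simp: eventually_sequentially)
  show ?thesis unfolding eventually_sequentially non_isolated_in_Dcl_def
  proof (intro exI[of _ "max N (max 1 b)"] allI impI)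
    fix n x x' assume n: "max N (max 1 b) \<le> n" and x: "x \<in> box n 0" "open_edge w g eps n {x, x'}"
    show "x \<in> Dcl w g eps n"
    proof (rule ccontr)
      assume "x \<notin> Dcl w g eps n"
      then have "finite (cluster w g eps n x)"
        using regular_infinite_cluster_mem_Dcl N n by auto
      then obtain R where R: "cluster w g eps n x \<subseteq> box R 0" by (rule finite_imp_subset_box)
      define n' where "n' = n + R + 2 * b + 1"
      have "regular n'" "n \<le> n'" using N n by (auto simp: n'_def)
      have down: "open_edge w g eps n e" if "open_edge w g eps n' e" for e
        using open_edge_antimono_eps_ge_1[OF assms(1) _ \<open>n \<le> n'\<close> that] n by simp
      have "(0 :: 'd site) \<in> box (n' + b) 0" by (simp add: mem_box)
      then obtain s s' where s: "s \<in> box b 0" "open_edge w g eps n' {s, s'}"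
        using open_bonds.ex_open_bond_in_box
            [OF open_bonds_level regular_few_closed[OF \<open>regular n'\<close>]]
        by blast
      obtain v v' where v: "v \<in> box n' 0" "v \<notin> box R 0" "open_edge w g eps n' {v, v'}"
        using regular_ex_open_bond_outside[OF \<open>regular n'\<close>, of R] by (auto simp: n'_def)
      have "s \<in> box n' 0" "s \<in> box n 0"
        using s(1) box_mono[of b n' 0] box_mono[of b n 0] n by (auto simp: n'_def)
      then have "(s, v) \<in> (open_adj w g eps n)\<^sup>*"
        using regular_non_isolated_linked[OF \<open>regular n'\<close> _ s(2) v(1,3)]
          open_adj_rtrancl_mono[OF down] by blast
      moreover have "(x, s) \<in> (open_adj w g eps n)\<^sup>*"
        using regular_non_isolated_linked[OF N x(1,2) \<open>s \<in> box n 0\<close> down[OF s(2)]] n by simp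
      ultimately have "v \<in> cluster w g eps n x" by (auto simp: cluster_def)
      with R v(2) show False by blast
    qed
  qed
qed

lemma regular_sparse:
  assumes "regular n" "non_isolated_in_Dcl n"
  shows "sparse b (box n 0 - Dcl w g eps n)"
  unfolding sparse_def
proof
  fix z
  let ?I = "box b z \<inter> (box n 0 - Dcl w g eps n)"
  have "a = a'" if "a \<in> ?I" "a' \<in> ?I" for a a'
  proof (rule ccontr)
    assume "a \<noteq> a'"
    have iso: "\<not> open_edge w g eps n {a, u}" "\<not> open_edge w g eps n {a', u}" for u
      using that assms(2) by (auto simp: non_isolated_in_Dcl_def)
    have "a \<in> box b z" "a' \<in> box b z" using that by auto
    then obtain z' where "z' \<in> box b a" "\<not> open_bonds.few_closed (open_edge w g eps n) b z'"
      using open_bonds.two_isolated_sites_not_few_closed[OF open_bonds_level \<open>a \<noteq> a'\<close> _ _ iso]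
      by blast
    moreover have "z' \<in> box (n + b) 0" using box_add that \<open>z' \<in> box b a\<close> by blast
    ultimately show False using regular_few_closed[OF assms(1)] by blast
  qed
  moreover have "finite ?I" using finite_box by blast
  ultimately show "card ?I \<le> 1" using card_le_Suc0_iff_eq by (metis One_nat_def)
qed

end

theorem lemma4p4:
  fixes w :: "'d::finite site set \<Rightarrow> real" and g :: "real \<Rightarrow> real"
    and b :: nat and eps :: real
  assumes d2: "CARD('d) \<ge> 2"
    and b_ge: "b \<ge> 2 * CARD('d)"
    and eps_pos: "eps > 0"
    and g_pos: "\<And>t. t > 0 \<Longrightarrow> g t > 0"
    and g_dec: "\<And>s t. 0 < s \<Longrightarrow> s \<le> t \<Longrightarrow> g t \<le> g s"
    and g_lim: "(g \<longlongrightarrow> 0) at_top"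
    and w_pos: "\<And>e. e \<in> nn_edges \<Longrightarrow> w e > 0"
    and H: "eventually (\<lambda>n.
              (\<forall>z \<in> box (n + b) 0.
                 card {e \<in> edges_of (box b z). w e \<le> g (real n powr (1 - eps))} \<le> 3 * CARD('d) - 1)
            \<and> (\<exists>!C. C \<in> infinite_clusters w g eps n)) sequentially"
  shows "eventually (\<lambda>n. sparse b (box n 0 - Dcl w g eps n)) sequentially"
proof -
  interpret conductances w g eps b
    using d2 b_ge g_dec by unfold_locales
  have regular: "eventually regular sequentially"
    using H unfolding regular_level_def[abs_def] .
  moreover have "eventually non_isolated_in_Dcl sequentially"
    using eventually_non_isolated_in_Dcl_eps_le_1[OF _ regular]
      eventually_non_isolated_in_Dcl_eps_ge_1[OF _ regular] by (cases "eps \<le> 1") auto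
  ultimately show ?thesis by eventually_elim (rule regular_sparse)
qed

end
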